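(* Let $(X,*,0)$ be a solid weak BCC-algebra. Then for all $x,y\in X$ belonging to the same branch, $x*(x*(x*y))=x*y$.
   Context: A weak BCC-algebra is a set $X$ with a binary operation $*$ and a constant $0$ satisfying, for all $x,y,z\in X$: (i) $((x*y)*(z*y))*(x*z)=0$; (ii) $x*x=0$; (iii) $x*0=x$; (iv) $x*y=y*x=0$ implies $x=y$. The relation $x\leqslant y$ iff $x*y=0$ is a partial order on $X$. Let $I(X)$ be the set of minimal elements of $X$ with respect to $\leqslant$. For $a\in I(X)$ the branch initiated by $a$ is $B(a)=\{x\in X: a\leqslant x\}$; "belonging to the same branch" means lying in a common $B(a)$. A weak BCC-algebra is called (left) solid if $(x*y)*z=(x*z)*y$ holds for all $x,y$ belonging to the same branch and all $z\in X$. *)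

theory Defs
  imports Main
begin

definition weak_bcc :: "'a set \<Rightarrow> ('a \<Rightarrow> 'a \<Rightarrow> 'a) \<Rightarrow> 'a \<Rightarrow> bool" where
  "weak_bcc X m z \<longleftrightarrow>
     z \<in> X \<and> (\<forall>x\<in>X. \<forall>y\<in>X. m x y \<in> X) \<and>
     (\<forall>x\<in>X. \<forall>y\<in>X. \<forall>w\<in>X. m (m (m x y) (m w y)) (m x w) = z) \<and>
     (\<forall>x\<in>X. m x x = z) \<and>
     (\<forall>x\<in>X. m x z = x) \<and>
     (\<forall>x\<in>X. \<forall>y\<in>X. m x y = z \<and> m y x = z \<longrightarrow> x = y)"

definition bcc_le :: "('a \<Rightarrow> 'a \<Rightarrow> 'a) \<Rightarrow> 'a \<Rightarrow> 'a \<Rightarrow> 'a \<Rightarrow> bool" where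
  "bcc_le m z x y \<longleftrightarrow> m x y = z"

definition minimal_elems :: "'a set \<Rightarrow> ('a \<Rightarrow> 'a \<Rightarrow> 'a) \<Rightarrow> 'a \<Rightarrow> 'a set" where
  "minimal_elems X m z = {a \<in> X. \<forall>y\<in>X. bcc_le m z y a \<longrightarrow> y = a}"

definition branch :: "'a set \<Rightarrow> ('a \<Rightarrow> 'a \<Rightarrow> 'a) \<Rightarrow> 'a \<Rightarrow> 'a \<Rightarrow> 'a set" where
  "branch X m z a = {x \<in> X. bcc_le m z a x}"

definition same_branch :: "'a set \<Rightarrow> ('a \<Rightarrow> 'a \<Rightarrow> 'a) \<Rightarrow> 'a \<Rightarrow> 'a \<Rightarrow> 'a \<Rightarrow> bool" where
  "same_branch X m z x y \<longleftrightarrow>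
     (\<exists>a\<in>minimal_elems X m z. x \<in> branch X m z a \<and> y \<in> branch X m z a)"

definition solid_weak_bcc :: "'a set \<Rightarrow> ('a \<Rightarrow> 'a \<Rightarrow> 'a) \<Rightarrow> 'a \<Rightarrow> bool" where
  "solid_weak_bcc X m z \<longleftrightarrow> weak_bcc X m z \<and>
     (\<forall>x\<in>X. \<forall>y\<in>X. \<forall>w\<in>X. same_branch X m z x y \<longrightarrow> m (m x y) w = m (m x w) y)"

end

theory Submission
  imports Defs
begin

text \<open>Put u = x*(x*y). Solidity gives u*y = (x*y)*(x*y) = 0, so u \<le> y and hence
  x*y \<le> x*u. Conversely u lies in the branch of x, because every branch is closed under
  right multiplication by elements w with 0*w = 0, and x*y is such an element. Solidity
  therefore applies to x and u and gives (x*u)*(x*y) = (x*(x*y))*u = u*u = 0, i.e.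
  x*u \<le> x*y. Antisymmetry finishes the proof.\<close>

locale weak_bcc_algebra =
  fixes X :: "'a set" and m :: "'a \<Rightarrow> 'a \<Rightarrow> 'a" and z :: 'a
  assumes weak_bcc: "weak_bcc X m z"
begin

lemma zero_closed: "z \<in> X"
  and mult_closed: "x \<in> X \<Longrightarrow> y \<in> X \<Longrightarrow> m x y \<in> X"
  and bcc_identity: "x \<in> X \<Longrightarrow> y \<in> X \<Longrightarrow> w \<in> X \<Longrightarrow> m (m (m x y) (m w y)) (m x w) = z"
  and mult_self: "x \<in> X \<Longrightarrow> m x x = z"
  and mult_zero_right: "x \<in> X \<Longrightarrow> m x z = x"
  and antisym: "x \<in> X \<Longrightarrow> y \<in> X \<Longrightarrow> m x y = z \<Longrightarrow> m y x = z \<Longrightarrow> x = y"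
  using weak_bcc unfolding weak_bcc_def by blast+

lemma mult_right_mono:
  assumes "x \<in> X" "y \<in> X" "w \<in> X" and "m x y = z"
  shows "m (m x w) (m y w) = z"
  using bcc_identity[of x w y] assms by (simp add: mult_zero_right mult_closed)

lemma mult_left_antimono:
  assumes "x \<in> X" "y \<in> X" "w \<in> X" and "m y x = z"
  shows "m (m w x) (m w y) = z"
  using bcc_identity[of w x y] assms by (simp add: mult_zero_right mult_closed)

lemma zero_mult_of_same_branch:
  assumes "a \<in> X" "x \<in> X" "y \<in> X" and "m a x = z" "m a y = z"
  shows "m z (m x y) = z"
  using mult_right_mono[of a x y] assms by simp

lemma minimal_mult:
  assumes "a \<in> minimal_elems X m z" "w \<in> X" and "m z w = z"
  shows "m a w = a"
proof -
  have a: "a \<in> X" "\<And>v. v \<in> X \<Longrightarrow> m v a = z \<Longrightarrow> v = a"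
    using assms(1) unfolding minimal_elems_def bcc_le_def by auto
  have "m (m a w) (m a z) = z"
    using mult_left_antimono[of w z a] assms(2,3) a(1) zero_closed by blast
  then show ?thesis
    using a mult_zero_right mult_closed assms(2) by simp
qed

lemma branch_mult_closed:
  assumes "a \<in> minimal_elems X m z" "x \<in> branch X m z a" "w \<in> X" and "m z w = z"
  shows "m x w \<in> branch X m z a"
proof -
  have "a \<in> X" "x \<in> X" "m a x = z"
    using assms(1,2) unfolding minimal_elems_def branch_def bcc_le_def by auto
  then have "m (m a w) (m x w) = z"
    using mult_right_mono assms(3) by blast
  then show ?thesis
    using minimal_mult[OF assms(1,3,4)] \<open>x \<in> X\<close> assms(3)
    unfolding branch_def bcc_le_def by (simp add: mult_closed)
qed

end

locale solid_weak_bcc_algebra = weak_bcc_algebra +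
  assumes solid: "solid_weak_bcc X m z"
begin

lemma solid_exchange:
  "x \<in> X \<Longrightarrow> y \<in> X \<Longrightarrow> w \<in> X \<Longrightarrow> same_branch X m z x y \<Longrightarrow> m (m x y) w = m (m x w) y"
  using solid unfolding solid_weak_bcc_def by blast

lemma mult_mult_le:
  assumes "x \<in> X" "y \<in> X" and "same_branch X m z x y"
  shows "m (m x (m x y)) y = z"
  using solid_exchange[of x y "m x y"] assms by (simp add: mult_closed mult_self)

end

theorem lemma3p5:
  fixes X :: "'a set" and m :: "'a \<Rightarrow> 'a \<Rightarrow> 'a" and z :: 'a
  assumes "solid_weak_bcc X m z"
    and "x \<in> X" and "y \<in> X"
    and "same_branch X m z x y"
  shows "m x (m x (m x y)) = m x y"
proof -
  interpret solid_weak_bcc_algebra X m z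
    using assms(1) unfolding solid_weak_bcc_algebra_def weak_bcc_algebra_def
      solid_weak_bcc_algebra_axioms_def solid_weak_bcc_def by blast
  obtain a where a: "a \<in> minimal_elems X m z" "x \<in> branch X m z a" "y \<in> branch X m z a"
    using assms(4) unfolding same_branch_def by blast
  define u where "u = m x (m x y)"
  have xy: "m x y \<in> X" and u: "u \<in> X"
    using assms(2,3) by (simp_all add: u_def mult_closed)
  have "m z (m x y) = z"
    using a assms(2,3) zero_mult_of_same_branch unfolding minimal_elems_def branch_def bcc_le_def
    by blast
  then have "u \<in> branch X m z a"
    using branch_mult_closed[OF a(1,2) xy] by (simp add: u_def)
  then have "same_branch X m z x u"
    using a unfolding same_branch_def by blast
  then have "m (m x u) (m x y) = z"
    using solid_exchange[OF assms(2) u xy] by (simp add: u_def[symmetric] mult_self u)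
  moreover have "m (m x y) (m x u) = z"
    using mult_left_antimono[OF assms(3) u assms(2)] mult_mult_le[OF assms(2-4)] by (simp add: u_def)
  ultimately show ?thesis
    using antisym mult_closed assms(2) u xy by (simp add: u_def)
qed

end
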